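(* Let $\mu$ be a non-zero finite non-negative Borel measure on $\mathbb T$ and $n\in\mathbb N$. Then for every $f\in\mathcal H_{\mu,n}$ and every $j=0,1,\ldots,n$, the integral $\int_{\mathbb D}|f^{(j)}(z)|^2P_\mu(z)(1-|z|^2)^{n-1}dA(z)$ is finite.
   Context: $\mathbb D$ open unit disc, $\mathbb T$ unit circle, $dA$ normalized area measure. $P_\mu(z)=\int_{\mathbb T}\frac{1-|z|^2}{|z-\zeta|^2}d\mu(\zeta)$, $D_{\mu,n}(f)=\frac{1}{n!(n-1)!}\int_{\mathbb D}|f^{(n)}|^2P_\mu(1-|z|^2)^{n-1}dA$, $\mathcal H_{\mu,n}=\{f\in\mathcal O(\mathbb D):D_{\mu,n}(f)<\infty\}$. *)

theory Defs
  imports "HOL-Analysis.Analysis" "HOL-Complex_Analysis.Complex_Analysis"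
begin

definition area_int :: "(complex \<Rightarrow> real) \<Rightarrow> ennreal" where
  "area_int g = (\<integral>\<^sup>+ z. ennreal (g z) * indicator (ball 0 1) z \<partial>lborel) / ennreal pi"

definition poisson_int :: "complex measure \<Rightarrow> complex \<Rightarrow> real" where
  "poisson_int \<mu> z = (\<integral> \<zeta>. (1 - (cmod z)\<^sup>2) / (cmod (z - \<zeta>))\<^sup>2 \<partial>\<mu>)"

definition D_mu :: "complex measure \<Rightarrow> nat \<Rightarrow> (complex \<Rightarrow> complex) \<Rightarrow> ennreal" where
  "D_mu \<mu> n f = ennreal (1 / (fact n * fact (n - 1))) *
     area_int (\<lambda>z. (cmod ((deriv ^^ n) f z))\<^sup>2 * poisson_int \<mu> z * (1 - (cmod z)\<^sup>2) ^ (n - 1))"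

definition H_mu :: "complex measure \<Rightarrow> nat \<Rightarrow> (complex \<Rightarrow> complex) set" where
  "H_mu \<mu> n = {f. f holomorphic_on ball 0 1 \<and> D_mu \<mu> n f < \<infinity>}"

end

theory Submission
  imports Defs
begin

text \<open>
  It suffices to show, for every g holomorphic on the unit disc, that finiteness of
  \<integral> |g'|^2 P_\<mu> (1-|z|^2)^m dA implies finiteness of \<integral> |g|^2 P_\<mu> (1-|z|^2)^m dA;
  iterating from f^(n) down to f^(j) gives the theorem. By Tonelli this reduces to the estimate
    \<integral> |g|^2 P(z,\<zeta>) (1-|z|^2)^m \<le> 6 (\<pi> |g(0)|^2 + \<integral> |g'|^2 P(z,\<zeta>) (1-|z|^2)^m)
  for each \<zeta> on the unit circle, with integrals over the disc against Lebesgue measure.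
  As P(z,\<zeta>) (1-|z|^2)^m = (1-|z|^2)^(m+1) / |\<zeta> - z|^2, both sides are radially weighted area
  integrals of |h|^2 for h = g/(\<zeta> - z) and h = g'/(\<zeta> - z). Rotation invariance of Lebesgue
  measure makes the monomials orthogonal for radial weights, so such an integral equals
  \<pi> \<Sum>_k |h_k|^2 B(k+1, m+2) in the Taylor coefficients h_k of h. Up to unimodular factors these
  coefficients are the partial sums A_k of \<alpha>_i = g_i \<zeta>^i, respectively E_k of (i+1) \<alpha>_(i+1), and the
  estimate becomes a discrete Hardy inequality for the weights B(k+1, m+2). It follows from the
  summation by parts A_(k+1) = \<alpha>_0 + E_k/(k+1) + \<Sum>_(i<k) E_i/((i+1)(i+2)).
\<close>

section \<open>Rotation invariance of Lebesgue measure on the complex plane\<close>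

lemma borel_measurable_Complex[measurable]:
  assumes [measurable]: "f \<in> borel_measurable M" "g \<in> borel_measurable M"
  shows "(\<lambda>x. Complex (f x) (g x)) \<in> borel_measurable M"
  unfolding Complex_eq by measurable

lemma borel_measurable_cnj[measurable]: "cnj \<in> borel_measurable borel"
  by (intro borel_measurable_continuous_onI continuous_intros)

lemma lborel_complex_eq_distr_pair:
  "(lborel :: complex measure) = distr (lborel \<Otimes>\<^sub>M lborel) borel (\<lambda>p. Complex (fst p) (snd p))"
proof (rule lborel_eqI)
  fix l u :: complex
  assume le: "\<And>b. b \<in> Basis \<Longrightarrow> l \<bullet> b \<le> u \<bullet> b"
  have "Re l \<le> Re u" "Im l \<le> Im u"
    using le[of 1] le[of \<i>] by (auto simp: Basis_complex_def)
  moreover have "(\<lambda>p. Complex (fst p) (snd p)) -` box l u \<inter> space (lborel \<Otimes>\<^sub>M lborel)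
      = {Re l<..<Re u} \<times> {Im l<..<Im u}"
    by (auto simp: box_def Basis_complex_def space_pair_measure)
  ultimately show "emeasure (distr (lborel \<Otimes>\<^sub>M lborel) borel (\<lambda>p. Complex (fst p) (snd p))) (box l u)
      = (\<Prod>b\<in>Basis. (u - l) \<bullet> b)"
    by (simp add: emeasure_distr lborel.emeasure_pair_measure_Times Basis_complex_def
          ennreal_mult[symmetric])
qed simp

lemma nn_integral_lborel_complex:
  assumes [measurable]: "f \<in> borel_measurable borel"
  shows "(\<integral>\<^sup>+z. f z \<partial>lborel) = (\<integral>\<^sup>+x. \<integral>\<^sup>+y. f (Complex x y) \<partial>lborel \<partial>lborel)"
    and "(\<integral>\<^sup>+z. f z \<partial>lborel) = (\<integral>\<^sup>+y. \<integral>\<^sup>+x. f (Complex x y) \<partial>lborel \<partial>lborel)"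
proof -
  have pair: "(\<integral>\<^sup>+z. f z \<partial>lborel) = (\<integral>\<^sup>+p. f (Complex (fst p) (snd p)) \<partial>(lborel \<Otimes>\<^sub>M lborel))"
    by (subst lborel_complex_eq_distr_pair) (simp add: nn_integral_distr)
  then show "(\<integral>\<^sup>+z. f z \<partial>lborel) = (\<integral>\<^sup>+x. \<integral>\<^sup>+y. f (Complex x y) \<partial>lborel \<partial>lborel)"
    by (simp add: lborel.nn_integral_fst[symmetric])
  also have "\<dots> = (\<integral>\<^sup>+y. \<integral>\<^sup>+x. f (Complex x y) \<partial>lborel \<partial>lborel)"
    by (rule lborel_pair.Fubini') measurable
  finally show "(\<integral>\<^sup>+z. f z \<partial>lborel) = (\<integral>\<^sup>+y. \<integral>\<^sup>+x. f (Complex x y) \<partial>lborel \<partial>lborel)" .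
qed

lemma nn_integral_lborel_translate_real:
  fixes f :: "real \<Rightarrow> ennreal"
  assumes "f \<in> borel_measurable borel"
  shows "(\<integral>\<^sup>+x. f (t + x) \<partial>lborel) = (\<integral>\<^sup>+x. f x \<partial>lborel)"
  using nn_integral_real_affine[of f 1 t] assms by simp

lemma nn_integral_lborel_shear_Re:
  assumes [measurable]: "f \<in> borel_measurable borel"
  shows "(\<integral>\<^sup>+z. f (z + of_real (c * Im z)) \<partial>lborel) = (\<integral>\<^sup>+z. f z \<partial>lborel)"
proof -
  have "(\<integral>\<^sup>+z. f (z + of_real (c * Im z)) \<partial>lborel)
      = (\<integral>\<^sup>+y. \<integral>\<^sup>+x. f (Complex (c * y + x) y) \<partial>lborel \<partial>lborel)"
    by (subst nn_integral_lborel_complex(2))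
       (auto intro!: nn_integral_cong arg_cong[where f=f] simp: complex_eq_iff)
  also have "\<dots> = (\<integral>\<^sup>+y. \<integral>\<^sup>+x. f (Complex x y) \<partial>lborel \<partial>lborel)"
    by (intro nn_integral_cong nn_integral_lborel_translate_real) measurable
  finally show ?thesis
    by (simp add: nn_integral_lborel_complex(2))
qed

lemma nn_integral_lborel_shear_Im:
  assumes [measurable]: "f \<in> borel_measurable borel"
  shows "(\<integral>\<^sup>+z. f (z + \<i> * of_real (c * Re z)) \<partial>lborel) = (\<integral>\<^sup>+z. f z \<partial>lborel)"
proof -
  have "(\<integral>\<^sup>+z. f (z + \<i> * of_real (c * Re z)) \<partial>lborel)
      = (\<integral>\<^sup>+x. \<integral>\<^sup>+y. f (Complex x (c * x + y)) \<partial>lborel \<partial>lborel)"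
    by (subst nn_integral_lborel_complex(1))
       (auto intro!: nn_integral_cong arg_cong[where f=f] simp: complex_eq_iff)
  also have "\<dots> = (\<integral>\<^sup>+x. \<integral>\<^sup>+y. f (Complex x y) \<partial>lborel \<partial>lborel)"
    by (intro nn_integral_cong nn_integral_lborel_translate_real) measurable
  finally show ?thesis
    by (simp add: nn_integral_lborel_complex(1))
qed

text \<open>A rotation is a product of three shears, each of which preserves Lebesgue measure by Fubini's
  theorem and translation invariance.\<close>

lemma mult_unimodular_eq_shears:
  fixes \<omega> z :: complex
  assumes "norm \<omega> = 1" "Im \<omega> \<noteq> 0"
  defines "p \<equiv> (Re \<omega> - 1) / Im \<omega>"
  shows "\<omega> * z = (\<lambda>w. w + of_real (p * Im w)) ((\<lambda>w. w + \<i> * of_real (Im \<omega> * Re w)) (z + of_real (p * Im z)))"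
proof -
  have unit: "(Re \<omega>)\<^sup>2 + (Im \<omega>)\<^sup>2 = 1"
    using assms(1) by (metis cmod_power2 power_one)
  have p1: "p * Im \<omega> = Re \<omega> - 1"
    using assms(2) by (simp add: p_def)
  have p2: "p * (Re \<omega> + 1) = - Im \<omega>"
    using assms(2) unit by (simp add: p_def field_simps power2_eq_square)
  have "Re z + p * Im z + p * (Im z + Im \<omega> * (Re z + p * Im z)) = Re \<omega> * Re z - Im \<omega> * Im z"
    using p1 p2 by algebra
  moreover have "Im z + Im \<omega> * (Re z + p * Im z) = Im \<omega> * Re z + Re \<omega> * Im z"
    using p1 by algebra
  ultimately show ?thesis
    by (simp add: complex_eq_iff algebra_simps)
qed

lemma distr_lborel_mult_unimodular_Im_neq_0:
  fixes \<omega> :: complex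
  assumes \<omega>: "norm \<omega> = 1" "Im \<omega> \<noteq> 0"
  shows "distr lborel borel ((*) \<omega>) = lborel"
proof (rule measure_eqI)
  fix A :: "complex set"
  assume "A \<in> sets (distr lborel borel ((*) \<omega>))"
  then have [measurable]: "A \<in> sets borel"
    by simp
  define p where "p = (Re \<omega> - 1) / Im \<omega>"
  have "emeasure (distr lborel borel ((*) \<omega>)) A = (\<integral>\<^sup>+z. indicator A z \<partial>distr lborel borel ((*) \<omega>))"
    by (rule nn_integral_indicator[symmetric]) simp
  also have "\<dots> = (\<integral>\<^sup>+z. indicator A (\<omega> * z) \<partial>lborel)"
    by (intro nn_integral_distr) simp_all
  also have "\<dots> = (\<integral>\<^sup>+z. (\<lambda>w. (\<lambda>v. indicator A (v + of_real (p * Im v))) (w + \<i> * of_real (Im \<omega> * Re w)))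
                        (z + of_real (p * Im z)) \<partial>lborel)"
    using mult_unimodular_eq_shears[OF \<omega>] by (simp add: p_def)
  also have "\<dots> = (\<integral>\<^sup>+z. (\<lambda>v. indicator A (v + of_real (p * Im v))) (z + \<i> * of_real (Im \<omega> * Re z)) \<partial>lborel)"
    by (rule nn_integral_lborel_shear_Re) measurable
  also have "\<dots> = (\<integral>\<^sup>+z. indicator A (z + of_real (p * Im z)) \<partial>lborel)"
    by (rule nn_integral_lborel_shear_Im) measurable
  also have "\<dots> = emeasure lborel A"
    by (subst nn_integral_lborel_shear_Re) simp_all
  finally show "emeasure (distr lborel borel ((*) \<omega>)) A = emeasure lborel A" .
qed simp

lemma distr_lborel_mult_unimodular:
  fixes \<omega> :: complex
  assumes "norm \<omega> = 1"
  shows "distr lborel borel ((*) \<omega>) = lborel"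
proof (cases "Im \<omega> = 0")
  case True
  then have "\<omega> = 1 \<or> \<omega> = -1"
    using assms by (auto simp: complex_eq_iff cmod_def abs_if split: if_splits)
  moreover have "distr lborel borel ((*) (-1 :: complex)) = lborel"
  proof -
    have "(*) (-1 :: complex) = (*) \<i> \<circ> (*) \<i>"
      by auto
    then have "distr lborel borel ((*) (-1 :: complex)) = distr (distr lborel borel ((*) \<i>)) borel ((*) \<i>)"
      by (simp add: distr_distr)
    then show ?thesis
      by (simp add: distr_lborel_mult_unimodular_Im_neq_0)
  qed
  moreover have "(*) (1 :: complex) = (\<lambda>z. z)"
    by auto
  ultimately show ?thesis
    by (auto simp: distr_id2)
qed (use assms distr_lborel_mult_unimodular_Im_neq_0 in simp)

lemma integral_lborel_mult_unimodular:
  fixes F :: "complex \<Rightarrow> 'b::{banach, second_countable_topology}"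
  assumes "norm \<omega> = 1" and [measurable]: "F \<in> borel_measurable borel"
  shows "(\<integral>z. F (\<omega> * z) \<partial>lborel) = (\<integral>z. F z \<partial>lborel)"
  by (subst (2) distr_lborel_mult_unimodular[OF assms(1), symmetric]) (simp add: integral_distr)

lemma integral_lborel_monomial_radial_eq_0:
  fixes \<psi> :: "complex \<Rightarrow> complex"
  assumes "j \<noteq> k" and radial: "\<And>\<omega> z. norm \<omega> = 1 \<Longrightarrow> \<psi> (\<omega> * z) = \<psi> z"
    and [measurable]: "\<psi> \<in> borel_measurable borel"
  shows "(\<integral>z. z ^ j * cnj z ^ k * \<psi> z \<partial>lborel) = 0"
proof -
  define \<theta> where "\<theta> = pi / (real j - real k)"
  define \<omega> where "\<omega> = cis \<theta>"
  have "\<omega> ^ j * cnj \<omega> ^ k = cis (real j * \<theta>) * cis (- (real k * \<theta>))"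
    using Complex.DeMoivre[of \<theta> j] Complex.DeMoivre[of "-\<theta>" k] by (simp add: \<omega>_def cis_cnj)
  also have "\<dots> = cis ((real j - real k) * \<theta>)"
    by (simp add: cis_mult left_diff_distrib)
  also have "\<dots> = -1"
    using \<open>j \<noteq> k\<close> by (simp add: \<theta>_def)
  finally have "(\<integral>z. z ^ j * cnj z ^ k * \<psi> z \<partial>lborel) = (\<integral>z. - (z ^ j * cnj z ^ k * \<psi> z) \<partial>lborel)"
    using integral_lborel_mult_unimodular[of \<omega> "\<lambda>z. z ^ j * cnj z ^ k * \<psi> z"] radial[of \<omega>]
    by (simp add: \<omega>_def power_mult_distrib mult_ac)
  then show ?thesis
    by simp
qed

section \<open>Radial integrals and Beta moments\<close>

lemma measure_eqI_lessThan_finite: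
  fixes M N :: "real measure"
  assumes "sets M = sets borel" "sets N = sets borel"
    and "\<And>x. emeasure M {..<x} < \<infinity>" "\<And>x. emeasure M {..<x} = emeasure N {..<x}"
  shows "M = N"
proof (rule measure_eqI_generator_eq_countable[where E="range lessThan" and A="lessThan ` \<nat>"])
  show "Int_stable (range lessThan :: real set set)"
  proof (rule Int_stableI_image)
    show "\<exists>c\<in>UNIV. {..<a} \<inter> {..<b} = {..<c}" for a b :: real
      by (rule bexI[of _ "min a b"]) auto
  qed
  show "\<Union> (lessThan ` \<nat>) = (UNIV :: real set)"
    using reals_Archimedean2 by (auto simp: Nats_def)
  show "lessThan ` \<nat> \<subseteq> range lessThan" "range lessThan \<subseteq> Pow (UNIV :: real set)"
    by auto
  show "sets M = sigma_sets UNIV (range lessThan)" "sets N = sigma_sets UNIV (range lessThan)"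
    using assms(1,2) by (simp_all add: borel_Iio)
  show "emeasure M A \<noteq> \<infinity>" if "A \<in> lessThan ` \<nat>" for A
    using that assms(3) by (auto simp: less_top)
  show "countable (lessThan ` \<nat>)"
    by (simp add: Nats_def)
qed (use assms(4) in auto)

lemma distr_lborel_norm_sq:
  "distr (lborel :: complex measure) borel (\<lambda>z. (cmod z)\<^sup>2) = density lborel (\<lambda>t. ennreal pi * indicator {0..} t)"
proof (rule measure_eqI_lessThan_finite)
  have "(cmod z)\<^sup>2 < a \<longleftrightarrow> cmod z < sqrt (max a 0)" for z a
  proof -
    have "(cmod z)\<^sup>2 < a \<longleftrightarrow> (cmod z)\<^sup>2 < max a 0"
      using zero_le_power2[of "cmod z"] by linarith
    then show ?thesis
      using real_sqrt_less_iff[of "(cmod z)\<^sup>2" "max a 0"] by simp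
  qed
  then have "(\<lambda>z. (cmod z)\<^sup>2) -` {..<a} = ball 0 (sqrt (max a 0))" for a
    by auto
  then have distr_eq: "emeasure (distr lborel borel (\<lambda>z. (cmod z)\<^sup>2)) {..<a} = ennreal (pi * max a 0)" for a
    by (subst emeasure_distr) (simp_all add: emeasure_ball unit_ball_vol_2)
  then show "emeasure (distr lborel borel (\<lambda>z. (cmod z)\<^sup>2)) {..<a} < \<infinity>" for a
    by simp
  have "emeasure (density lborel (\<lambda>t. ennreal pi * indicator {0..} t)) {..<a}
      = (\<integral>\<^sup>+t. ennreal pi * indicator {0..<a} t \<partial>lborel)" for a :: real
    by (subst emeasure_density) (auto intro!: nn_integral_cong split: split_indicator)
  then show "emeasure (distr lborel borel (\<lambda>z. (cmod z)\<^sup>2)) {..<a}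
      = emeasure (density lborel (\<lambda>t. ennreal pi * indicator {0..} t)) {..<a}" for a
    by (cases "a \<ge> 0") (simp_all add: distr_eq nn_integral_cmult_indicator ennreal_mult[symmetric])
qed simp_all

lemma nn_integral_lborel_radial:
  fixes F :: "real \<Rightarrow> ennreal"
  assumes [measurable]: "F \<in> borel_measurable borel"
  shows "(\<integral>\<^sup>+z. F ((cmod z)\<^sup>2) \<partial>lborel) = pi * (\<integral>\<^sup>+t. F t * indicator {0..} t \<partial>lborel)"
proof -
  have "(\<integral>\<^sup>+z. F ((cmod z)\<^sup>2) \<partial>lborel) = (\<integral>\<^sup>+t. F t \<partial>distr lborel borel (\<lambda>z. (cmod z)\<^sup>2))"
    by (simp add: nn_integral_distr)
  also have "\<dots> = (\<integral>\<^sup>+t. ennreal pi * (F t * indicator {0..} t) \<partial>lborel)"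
    unfolding distr_lborel_norm_sq by (simp add: nn_integral_density mult_ac)
  finally show ?thesis
    by (simp add: nn_integral_cmult)
qed

definition beta_moment :: "nat \<Rightarrow> nat \<Rightarrow> real" where
  "beta_moment s k = fact k * fact s / fact (k + s + 1)"

lemma beta_moment_pos: "beta_moment s k > 0"
  by (simp add: beta_moment_def)

lemma has_integral_beta_moment:
  "((\<lambda>t. t ^ k * (1 - t) ^ s) has_integral beta_moment s k) {0..1::real}"
proof -
  have "Beta (real k + 1) (real s + 1)
      = Gamma (1 + real k) * Gamma (1 + real s) / Gamma (1 + real (k + s + 1))"
    by (simp add: Beta_def add_ac)
  also have "\<dots> = beta_moment s k"
    by (simp only: Gamma_fact beta_moment_def)
  finally have "Beta (real k + 1) (real s + 1) = beta_moment s k" .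
  then have "((\<lambda>t. t powr real k * (1 - t) powr real s) has_integral beta_moment s k) {0..1}"
    using has_integral_Beta_real[of "real k + 1" "real s + 1"] by simp
  then show ?thesis
    by (rule has_integral_spike_finite[of "{0, 1}", rotated 2]) (auto simp: powr_realpow)
qed

lemma nn_integral_disc_moment:
  "(\<integral>\<^sup>+z. ennreal ((cmod z) ^ (2 * k) * (1 - (cmod z)\<^sup>2) ^ s) * indicator (ball 0 1) z \<partial>lborel)
    = pi * beta_moment s k"
proof -
  define F where "F t = ennreal (t ^ k * (1 - t) ^ s) * indicator {..<1} t" for t :: real
  have "(\<integral>\<^sup>+z. ennreal ((cmod z) ^ (2 * k) * (1 - (cmod z)\<^sup>2) ^ s) * indicator (ball 0 1) z \<partial>lborel)
      = (\<integral>\<^sup>+z. F ((cmod z)\<^sup>2) \<partial>lborel)"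
    by (intro nn_integral_cong) (simp add: F_def power_mult abs_square_less_1 indicator_def)
  also have "\<dots> = pi * (\<integral>\<^sup>+t. F t * indicator {0..} t \<partial>lborel)"
    by (rule nn_integral_lborel_radial) (simp add: F_def)
  also have "(\<integral>\<^sup>+t. F t * indicator {0..} t \<partial>lborel)
      = (\<integral>\<^sup>+t. ennreal (t ^ k * (1 - t) ^ s) * indicator {0..1} t \<partial>lborel)"
    using AE_lborel_singleton[of 1]
    by (intro nn_integral_cong_AE) (auto simp: F_def indicator_def)
  also have "\<dots> = beta_moment s k"
    by (rule nn_integral_has_integral_lebesgue'[OF _ has_integral_beta_moment]) simp
  finally show ?thesis
    using beta_moment_pos[of s k] by (simp add: ennreal_mult)
qed

text \<open>Integrated form of \<open>t\<^sup>k (1 - t)\<^sup>s\<^sup>+\<^sup>1 = t\<^sup>k (1 - t)\<^sup>s - t\<^sup>k\<^sup>+\<^sup>1 (1 - t)\<^sup>s\<close>.\<close>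

lemma beta_moment_Suc_eq: "beta_moment (Suc s) k = beta_moment s k - beta_moment s (Suc k)"
proof -
  define P Q F where "P = real k + real s + 2" and "Q = real k + real s + 1" and "F = (fact (k + s) :: real)"
  have PQF: "P > 0" "Q > 0" "F > 0"
    by (simp_all add: P_def Q_def F_def)
  have facts: "fact (k + Suc s + 1) = P * Q * F" "fact (Suc k + s + 1) = P * Q * F" "fact (k + s + 1) = Q * F"
    "fact (Suc s) = (real s + 1) * (fact s :: real)" "fact (Suc k) = (real k + 1) * (fact k :: real)"
    by (simp_all add: P_def Q_def F_def algebra_simps)
  have "fact k * ((real s + 1) * fact s) / (P * Q * F)
      = fact k * fact s / (Q * F) - (real k + 1) * fact k * fact s / (P * Q * F)"
    using PQF by (simp add: field_simps) (simp add: P_def algebra_simps)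
  then show ?thesis
    unfolding beta_moment_def by (simp only: facts)
qed

lemma beta_moment_Suc_le: "beta_moment s (Suc k) \<le> beta_moment s k"
  using beta_moment_Suc_eq[of s k] beta_moment_pos[of "Suc s" k] by simp

lemma beta_moment_le: "beta_moment s k \<le> fact s / (real k + 1)"
proof -
  have "(real k + 1) * fact k = (fact (Suc k) :: real)"
    by simp
  also have "\<dots> \<le> fact (k + s + 1)"
    by (intro fact_mono) auto
  finally have "fact k / fact (k + s + 1) \<le> 1 / (real k + 1)"
    by (simp add: divide_simps mult.commute)
  then have "fact s * (fact k / fact (k + s + 1)) \<le> fact s * (1 / (real k + 1))"
    by (rule mult_left_mono) simp
  then show ?thesis
    by (simp add: beta_moment_def mult.commute)
qed

lemma beta_moment_tail_sums: "(\<lambda>k. beta_moment (Suc s) (k + j)) sums beta_moment s j"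
proof -
  have "(\<lambda>k. beta_moment s (k + j)) \<longlonglongrightarrow> 0"
  proof (rule Lim_null_comparison)
    show "\<forall>\<^sub>F k in sequentially. norm (beta_moment s (k + j)) \<le> fact s * inverse (real (Suc k))"
    proof (intro always_eventually allI)
      fix k
      have "beta_moment s (k + j) \<le> fact s * inverse (real (k + j) + 1)"
        using beta_moment_le[of s "k + j"] by (simp add: divide_inverse)
      also have "\<dots> \<le> fact s * inverse (real (Suc k))"
        by (intro mult_left_mono le_imp_inverse_le) auto
      finally show "norm (beta_moment s (k + j)) \<le> fact s * inverse (real (Suc k))"
        using beta_moment_pos[of s "k + j"] by simp
    qed
    show "(\<lambda>k. fact s * inverse (real (Suc k))) \<longlonglongrightarrow> 0"
      by (rule tendsto_mult_right_zero[OF LIMSEQ_inverse_real_of_nat])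
  qed
  then have "(\<lambda>k. beta_moment s (k + j) - beta_moment s (Suc k + j)) sums (beta_moment s (0 + j) - 0)"
    by (rule telescope_sums')
  then show ?thesis
    by (simp add: beta_moment_Suc_eq)
qed

lemma beta_moment_tail_le: "beta_moment s (i + 2) \<le> (real i + 1) * (real i + 2) * beta_moment (Suc s) i"
proof -
  have "fact (i + 2) = (real i + 1) * (real i + 2) * (fact i :: real)"
    by (simp add: numeral_2_eq_2 algebra_simps)
  moreover have "fact (i + 2) * fact s / fact (i + 2 + s + 1) \<le> fact (i + 2) * fact (Suc s) / (fact (i + s + 2) :: real)"
    by (intro frac_le mult_left_mono fact_mono) auto
  ultimately show ?thesis
    by (simp add: beta_moment_def add_ac mult_ac)
qed

section \<open>Parseval's identity for radially weighted area integrals\<close>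

lemma borel_cball[measurable]: "cball (c :: 'a::metric_space) r \<in> sets borel"
  by (simp add: borel_closed)

lemma integrable_lborel_bounded_cball:
  fixes F :: "complex \<Rightarrow> 'b::{banach, second_countable_topology}"
  assumes "F \<in> borel_measurable borel" "\<And>z. norm (F z) \<le> B * indicator (cball 0 r) z"
  shows "integrable lborel F"
proof (rule Bochner_Integration.integrable_bound)
  show "integrable lborel (\<lambda>z::complex. B * indicator (cball 0 r) z :: real)"
    using emeasure_bounded_finite[of "cball (0::complex) r"]
    by (intro integrable_mult_right integrable_real_indicator) auto
  show "AE z in lborel. norm (F z) \<le> norm (B * indicator (cball 0 r) z :: real)"
    using assms(2) by (intro AE_I2) (smt (verit) norm_ge_zero real_norm_def)
qed (use assms(1) in simp)

lemma integral_norm_sq_polynomial_radial: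
  fixes a :: "nat \<Rightarrow> complex" and w :: "complex \<Rightarrow> real"
  assumes radial: "\<And>\<omega> z. norm \<omega> = 1 \<Longrightarrow> w (\<omega> * z) = w z"
    and [measurable]: "w \<in> borel_measurable borel"
    and int: "\<And>j k. integrable lborel (\<lambda>z. z ^ j * cnj z ^ k * of_real (w z))"
  shows "(\<integral>z. (cmod (\<Sum>k<N. a k * z ^ k))\<^sup>2 * w z \<partial>lborel)
       = (\<Sum>k<N. (cmod (a k))\<^sup>2 * (\<integral>z. (cmod z) ^ (2 * k) * w z \<partial>lborel))"
proof -
  define I where "I j k = (\<integral>z. z ^ j * cnj z ^ k * of_real (w z) \<partial>lborel)" for j k
  have off_diagonal: "I j k = 0" if "j \<noteq> k" for j k
    unfolding I_def using that by (rule integral_lborel_monomial_radial_eq_0) (auto simp: radial)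
  have "z ^ k * cnj z ^ k = of_real ((cmod z) ^ (2 * k))" for z :: complex and k
  proof -
    have "z ^ k * cnj z ^ k = (z * cnj z) ^ k"
      by (simp add: power_mult_distrib)
    then show ?thesis
      by (simp add: complex_norm_square[symmetric] power_mult)
  qed
  then have diagonal: "I k k = of_real (\<integral>z. (cmod z) ^ (2 * k) * w z \<partial>lborel)" for k
    by (simp add: I_def integral_complex_of_real[symmetric] del: of_real_power)
  have "of_real ((cmod (\<Sum>k<N. a k * z ^ k))\<^sup>2 * w z)
      = (\<Sum>j<N. \<Sum>k<N. a j * cnj (a k) * (z ^ j * cnj z ^ k * of_real (w z)))" for z
  proof -
    have "of_real ((cmod (\<Sum>k<N. a k * z ^ k))\<^sup>2) = (\<Sum>j<N. a j * z ^ j) * cnj (\<Sum>k<N. a k * z ^ k)"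
      by (rule complex_norm_square)
    also have "\<dots> = (\<Sum>j<N. \<Sum>k<N. a j * cnj (a k) * (z ^ j * cnj z ^ k))"
      by (simp add: sum_distrib_left sum_distrib_right mult_ac) (rule sum.swap)
    finally show ?thesis
      by (simp add: sum_distrib_right mult.assoc)
  qed
  then have "of_real (\<integral>z. (cmod (\<Sum>k<N. a k * z ^ k))\<^sup>2 * w z \<partial>lborel)
      = (\<Sum>j<N. \<Sum>k<N. a j * cnj (a k) * I j k)"
    by (simp add: integral_complex_of_real[symmetric] I_def int)
  also have "\<dots> = (\<Sum>j<N. a j * cnj (a j) * I j j)"
  proof (rule sum.cong[OF refl])
    show "(\<Sum>k<N. a j * cnj (a k) * I j k) = a j * cnj (a j) * I j j" if "j \<in> {..<N}" for j
      using that by (subst sum.remove[of _ j]) (auto simp: off_diagonal intro!: sum.neutral)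
  qed
  also have "\<dots> = of_real (\<Sum>k<N. (cmod (a k))\<^sup>2 * (\<integral>z. (cmod z) ^ (2 * k) * w z \<partial>lborel))"
    by (simp add: diagonal complex_norm_square[symmetric])
  finally show ?thesis
    using of_real_eq_iff by blast
qed

lemma summable_norm_power_series_ball:
  fixes a :: "nat \<Rightarrow> complex"
  assumes "\<And>z. z \<in> ball 0 1 \<Longrightarrow> summable (\<lambda>k. a k * z ^ k)" and "z \<in> ball 0 1"
  shows "summable (\<lambda>k. norm (a k * z ^ k))"
proof -
  obtain \<rho> where \<rho>: "cmod z < \<rho>" "\<rho> < 1"
    using assms(2) dense by auto
  moreover have "0 < \<rho>"
    using \<rho>(1) norm_ge_zero[of z] by linarith
  ultimately have "summable (\<lambda>k. a k * of_real \<rho> ^ k)"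
    using assms(1)[of "of_real \<rho>"] by simp
  then show ?thesis
    by (rule powser_insidea) (use \<rho> in simp)
qed

lemma power_series_partial_sums_bounded:
  fixes a :: "nat \<Rightarrow> complex"
  assumes ser: "\<And>z. z \<in> ball 0 1 \<Longrightarrow> (\<lambda>k. a k * z ^ k) sums h z" and r: "0 \<le> r" "r < 1"
  obtains K where "\<And>N z. z \<in> cball 0 r \<Longrightarrow> cmod (\<Sum>k<N. a k * z ^ k) \<le> K"
proof
  have summable: "summable (\<lambda>k. norm (a k * of_real r ^ k))"
    using ser r by (intro summable_norm_power_series_ball) (auto simp: sums_iff)
  show "cmod (\<Sum>k<N. a k * z ^ k) \<le> (\<Sum>k. norm (a k * of_real r ^ k))" if "z \<in> cball 0 r" for N z
  proof -
    have "cmod (\<Sum>k<N. a k * z ^ k) \<le> (\<Sum>k<N. norm (a k * of_real r ^ k))"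
      using that r by (intro norm_sum[THEN order_trans] sum_mono)
        (auto simp: norm_mult norm_power intro!: mult_left_mono power_mono)
    also have "\<dots> \<le> (\<Sum>k. norm (a k * of_real r ^ k))"
      by (rule sum_le_suminf[OF summable]) auto
    finally show ?thesis .
  qed
qed

lemma integrable_lborel_cball_weight:
  fixes F :: "complex \<Rightarrow> 'b::{banach, second_countable_topology}"
  assumes "F \<in> borel_measurable borel" "w \<in> borel_measurable borel"
    and "\<And>z. z \<in> cball 0 r \<Longrightarrow> norm (F z) \<le> B" and w_bound: "\<And>z. \<bar>w z\<bar> \<le> indicator (cball 0 r) z"
  shows "integrable lborel (\<lambda>z. w z *\<^sub>R F z)"
proof (rule integrable_lborel_bounded_cball)
  show "norm (w z *\<^sub>R F z) \<le> B * indicator (cball 0 r) z" for z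
  proof (cases "z \<in> cball 0 r")
    case True
    then have "\<bar>w z\<bar> * norm (F z) \<le> 1 * B"
      using assms(3)[of z] w_bound[of z] by (intro mult_mono) auto
    with True show ?thesis
      by simp
  qed (use w_bound[of z] in simp)
qed (use assms in measurable)

lemma integrable_monomial_cball_weight:
  fixes w :: "complex \<Rightarrow> real"
  assumes "w \<in> borel_measurable borel" and "\<And>z. \<bar>w z\<bar> \<le> indicator (cball 0 r) z"
  shows "integrable lborel (\<lambda>z. z ^ j * cnj z ^ k * of_real (w z))"
proof -
  have "norm (z ^ j * cnj z ^ k) \<le> r ^ (j + k)" if "z \<in> cball 0 r" for z
  proof -
    have "cmod z \<le> r"
      using that by simp
    moreover have "0 \<le> r"
      using \<open>cmod z \<le> r\<close> norm_ge_zero[of z] by linarith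
    ultimately show ?thesis
      by (simp add: norm_mult norm_power power_add mult_mono power_mono)
  qed
  then have "integrable lborel (\<lambda>z. w z *\<^sub>R (z ^ j * cnj z ^ k))"
    by (intro integrable_lborel_cball_weight[OF _ assms(1) _ assms(2)]) simp_all
  then show ?thesis
    by (simp add: scaleR_conv_of_real mult.commute)
qed

text \<open>On a compact subdisc the partial sums are uniformly bounded, so dominated convergence applies.\<close>

lemma power_series_cball_weight_sums:
  fixes a :: "nat \<Rightarrow> complex" and w :: "complex \<Rightarrow> real"
  assumes ser: "\<And>z. z \<in> ball 0 1 \<Longrightarrow> (\<lambda>k. a k * z ^ k) sums h z"
    and r: "0 \<le> r" "r < 1"
    and radial: "\<And>\<omega> z. norm \<omega> = 1 \<Longrightarrow> w (\<omega> * z) = w z"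
    and w_meas[measurable]: "w \<in> borel_measurable borel"
    and w_bound: "\<And>z. \<bar>w z\<bar> \<le> indicator (cball 0 r) z"
  shows "(\<lambda>k. (cmod (a k))\<^sup>2 * (\<integral>z. (cmod z) ^ (2 * k) * w z \<partial>lborel)) sums (\<integral>z. (cmod (h z))\<^sup>2 * w z \<partial>lborel)"
    and "integrable lborel (\<lambda>z. (cmod (h z))\<^sup>2 * w z)"
proof -
  have w_zero: "w z = 0" if "z \<notin> cball 0 r" for z
    using w_bound[of z] that by simp
  obtain K where K: "\<And>N z. z \<in> cball 0 r \<Longrightarrow> cmod (\<Sum>k<N. a k * z ^ k) \<le> K"
    using power_series_partial_sums_bounded[OF ser r] by blast
  define S where "S N z = (cmod (\<Sum>k<N. a k * z ^ k))\<^sup>2 * w z" for N z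
  have [measurable]: "S N \<in> borel_measurable borel" for N
    unfolding S_def by measurable
  have S_lim: "(\<lambda>N. S N z) \<longlonglongrightarrow> (cmod (h z))\<^sup>2 * w z" for z
  proof (cases "z \<in> cball 0 r")
    case True
    with r ser[of z] have "(\<lambda>N. \<Sum>k<N. a k * z ^ k) \<longlonglongrightarrow> h z"
      by (simp add: sums_def)
    then show ?thesis
      unfolding S_def by (intro tendsto_intros)
  qed (simp add: S_def w_zero)
  have [measurable]: "(\<lambda>z. (cmod (h z))\<^sup>2 * w z) \<in> borel_measurable borel"
    using S_lim by (rule borel_measurable_LIMSEQ_real) simp
  have S_bound: "AE z in lborel. norm (S N z) \<le> indicator (cball 0 r) z *\<^sub>R K\<^sup>2" for N
  proof (intro AE_I2)
    fix z
    show "norm (S N z) \<le> indicator (cball 0 r) z *\<^sub>R K\<^sup>2"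
    proof (cases "z \<in> cball 0 r")
      case True
      then have "(cmod (\<Sum>k<N. a k * z ^ k))\<^sup>2 * \<bar>w z\<bar> \<le> K\<^sup>2 * 1"
        using K[of z N] w_bound[of z] by (intro mult_mono power_mono) auto
      with True show ?thesis
        by (simp add: S_def abs_mult)
    qed (simp add: S_def w_zero)
  qed
  have int_bound: "integrable lborel (\<lambda>z::complex. indicator (cball 0 r) z *\<^sub>R K\<^sup>2 :: real)"
    by (rule integrable_lborel_cball_weight[where B="K\<^sup>2"]) auto
  have S_lim_AE: "AE z in lborel. (\<lambda>N. S N z) \<longlonglongrightarrow> (cmod (h z))\<^sup>2 * w z"
    using S_lim by simp
  have "(\<lambda>N. \<integral>z. S N z \<partial>lborel) \<longlonglongrightarrow> (\<integral>z. (cmod (h z))\<^sup>2 * w z \<partial>lborel)"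
    by (rule integral_dominated_convergence[OF _ _ int_bound S_lim_AE S_bound]) simp_all
  moreover have "(\<integral>z. S N z \<partial>lborel) = (\<Sum>k<N. (cmod (a k))\<^sup>2 * (\<integral>z. (cmod z) ^ (2 * k) * w z \<partial>lborel))" for N
    unfolding S_def
    by (rule integral_norm_sq_polynomial_radial[OF radial w_meas integrable_monomial_cball_weight[OF w_meas w_bound]])
  ultimately show "(\<lambda>k. (cmod (a k))\<^sup>2 * (\<integral>z. (cmod z) ^ (2 * k) * w z \<partial>lborel))
      sums (\<integral>z. (cmod (h z))\<^sup>2 * w z \<partial>lborel)"
    by (simp add: sums_def)
  show "integrable lborel (\<lambda>z. (cmod (h z))\<^sup>2 * w z)"
    by (rule integrable_dominated_convergence[OF _ _ int_bound S_lim_AE S_bound]) simp_all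
qed

lemma nn_integral_norm_sq_power_series_cball:
  fixes a :: "nat \<Rightarrow> complex" and w :: "complex \<Rightarrow> real"
  assumes ser: "\<And>z. z \<in> ball 0 1 \<Longrightarrow> (\<lambda>k. a k * z ^ k) sums h z"
    and r: "0 \<le> r" "r < 1"
    and radial: "\<And>\<omega> z. norm \<omega> = 1 \<Longrightarrow> w (\<omega> * z) = w z"
    and [measurable]: "w \<in> borel_measurable borel"
    and w_bounds: "\<And>z. z \<in> ball 0 1 \<Longrightarrow> 0 \<le> w z \<and> w z \<le> 1"
  shows "(\<lambda>z. ennreal ((cmod (h z))\<^sup>2 * w z) * indicator (cball 0 r) z) \<in> borel_measurable borel"
    and "(\<integral>\<^sup>+z. ennreal ((cmod (h z))\<^sup>2 * w z) * indicator (cball 0 r) z \<partial>lborel)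
       = (\<Sum>k. ennreal ((cmod (a k))\<^sup>2) * (\<integral>\<^sup>+z. ennreal ((cmod z) ^ (2 * k) * w z) * indicator (cball 0 r) z \<partial>lborel))"
proof -
  define v where "v z = w z * indicator (cball 0 r) z" for z
  have v_bounds: "0 \<le> v z" "v z \<le> indicator (cball 0 r) z" for z
    using w_bounds[of z] r by (auto simp: v_def indicator_def)
  have truncate: "ennreal (x * v z) = ennreal (x * w z) * indicator (cball 0 r) z" for x z
    by (simp add: v_def indicator_def)
  have v_radial: "v (\<omega> * z) = v z" if "norm \<omega> = 1" for \<omega> z
    using that by (simp add: v_def radial norm_mult indicator_def)
  have v_meas: "v \<in> borel_measurable borel"
    unfolding v_def by measurable
  have v_abs: "\<bar>v z\<bar> \<le> indicator (cball 0 r) z" for z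
    using v_bounds[of z] by simp
  have sums: "(\<lambda>k. (cmod (a k))\<^sup>2 * (\<integral>z. (cmod z) ^ (2 * k) * v z \<partial>lborel))
      sums (\<integral>z. (cmod (h z))\<^sup>2 * v z \<partial>lborel)"
    using ser v_radial v_meas v_abs by (rule power_series_cball_weight_sums(1)[OF _ r])
  have int: "integrable lborel (\<lambda>z. (cmod (h z))\<^sup>2 * v z)"
    using ser v_radial v_meas v_abs by (rule power_series_cball_weight_sums(2)[OF _ r])
  have "integrable lborel (\<lambda>z. v z *\<^sub>R (cmod z) ^ (2 * k))" for k
    by (rule integrable_lborel_cball_weight[where B="r ^ (2 * k)", OF _ v_meas _ v_abs]) (auto intro!: power_mono)
  then have int_moment: "integrable lborel (\<lambda>z. (cmod z) ^ (2 * k) * v z)" for k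
    by (simp add: mult.commute)
  show "(\<lambda>z. ennreal ((cmod (h z))\<^sup>2 * w z) * indicator (cball 0 r) z) \<in> borel_measurable borel"
    using borel_measurable_integrable[OF int] unfolding truncate[symmetric] by measurable
  have "(\<integral>\<^sup>+z. ennreal ((cmod (h z))\<^sup>2 * v z) \<partial>lborel) = ennreal (\<integral>z. (cmod (h z))\<^sup>2 * v z \<partial>lborel)"
    using int v_bounds by (intro nn_integral_eq_integral) simp_all
  also have "\<dots> = (\<Sum>k. ennreal ((cmod (a k))\<^sup>2 * (\<integral>z. (cmod z) ^ (2 * k) * v z \<partial>lborel)))"
    unfolding sums_unique[OF sums] using sums v_bounds
    by (intro suminf_ennreal2[symmetric]) (auto simp: sums_iff intro!: mult_nonneg_nonneg integral_nonneg_AE)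
  also have "\<dots> = (\<Sum>k. ennreal ((cmod (a k))\<^sup>2) * (\<integral>\<^sup>+z. ennreal ((cmod z) ^ (2 * k) * v z) \<partial>lborel))"
    using int_moment v_bounds
    by (intro suminf_cong) (simp add: nn_integral_eq_integral ennreal_mult'[symmetric])
  finally show "(\<integral>\<^sup>+z. ennreal ((cmod (h z))\<^sup>2 * w z) * indicator (cball 0 r) z \<partial>lborel)
      = (\<Sum>k. ennreal ((cmod (a k))\<^sup>2) * (\<integral>\<^sup>+z. ennreal ((cmod z) ^ (2 * k) * w z) * indicator (cball 0 r) z \<partial>lborel))"
    by (simp only: truncate)
qed

lemma SUP_indicator_cball_eq_ball:
  fixes z :: "'a::real_normed_vector"
  shows "(SUP n. indicator (cball 0 (1 - 1 / Suc n)) z) = (indicator (ball 0 1) z :: ennreal)"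
proof (cases "z \<in> ball 0 1")
  case True
  then obtain n where "inverse (real (Suc n)) < 1 - norm z"
    using reals_Archimedean[of "1 - norm z"] by auto
  then have "z \<in> cball 0 (1 - 1 / Suc n)"
    by (simp add: field_simps)
  then have "(SUP n. indicator (cball 0 (1 - 1 / Suc n)) z) = (1 :: ennreal)"
    by (intro antisym SUP_upper2[of n] SUP_least) (auto simp: indicator_def)
  with True show ?thesis
    by simp
next
  case False
  have "z \<notin> cball 0 (1 - 1 / Suc n)" for n
  proof -
    have "1 - 1 / Suc n < (1 :: real)"
      by simp
    also have "1 \<le> norm z"
      using False by simp
    finally show ?thesis
      by simp
  qed
  with False show ?thesis
    by simp
qed

lemma nn_integral_ball_eq_SUP_cball:
  fixes G :: "complex \<Rightarrow> ennreal"
  assumes "\<And>n. (\<lambda>z. G z * indicator (cball 0 (1 - 1 / Suc n)) z) \<in> borel_measurable borel"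
  shows "(\<integral>\<^sup>+z. G z * indicator (ball 0 1) z \<partial>lborel)
       = (SUP n. \<integral>\<^sup>+z. G z * indicator (cball 0 (1 - 1 / Suc n)) z \<partial>lborel)"
proof -
  have "G z * indicator (ball 0 1) z = (SUP n. G z * indicator (cball 0 (1 - 1 / Suc n)) z)" for z
    by (subst SUP_mult_left_ennreal[symmetric]) (simp only: SUP_indicator_cball_eq_ball)
  then have "(\<integral>\<^sup>+z. G z * indicator (ball 0 1) z \<partial>lborel)
      = (\<integral>\<^sup>+z. (SUP n. G z * indicator (cball 0 (1 - 1 / Suc n)) z) \<partial>lborel)"
    by (simp only:)
  also have "\<dots> = (SUP n. \<integral>\<^sup>+z. G z * indicator (cball 0 (1 - 1 / Suc n)) z \<partial>lborel)"
  proof (rule nn_integral_monotone_convergence_SUP)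
    show "incseq (\<lambda>n z. G z * indicator (cball 0 (1 - 1 / Suc n)) z)"
    proof (rule monoI, rule le_funI)
      fix m n :: nat and z :: complex
      assume "m \<le> n"
      then have "1 / real (Suc n) \<le> 1 / real (Suc m)"
        by (intro divide_left_mono) auto
      then show "G z * indicator (cball 0 (1 - 1 / Suc m)) z \<le> G z * indicator (cball 0 (1 - 1 / Suc n)) z"
        by (intro mult_left_mono indicator_leI) auto
    qed
  qed (use assms in simp)
  finally show ?thesis .
qed

lemma nn_integral_ball_norm_sq_power_series:
  fixes a :: "nat \<Rightarrow> complex" and w :: "complex \<Rightarrow> real"
  assumes ser: "\<And>z. z \<in> ball 0 1 \<Longrightarrow> (\<lambda>k. a k * z ^ k) sums h z"
    and radial: "\<And>\<omega> z. norm \<omega> = 1 \<Longrightarrow> w (\<omega> * z) = w z"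
    and w_meas: "w \<in> borel_measurable borel"
    and w_bounds: "\<And>z. z \<in> ball 0 1 \<Longrightarrow> 0 \<le> w z \<and> w z \<le> 1"
  shows "(\<integral>\<^sup>+z. ennreal ((cmod (h z))\<^sup>2 * w z) * indicator (ball 0 1) z \<partial>lborel)
       = (\<Sum>k. ennreal ((cmod (a k))\<^sup>2) *
            (\<integral>\<^sup>+z. ennreal ((cmod z) ^ (2 * k) * w z) * indicator (ball 0 1) z \<partial>lborel))"
proof -
  define r :: "nat \<Rightarrow> real" where "r n = 1 - 1 / Suc n" for n
  have "0 \<le> r n" "r n < 1" for n
    by (simp_all add: r_def)
  note truncated = nn_integral_norm_sq_power_series_cball[OF ser this radial w_meas w_bounds]
  note ball_eq_SUP = nn_integral_ball_eq_SUP_cball[folded r_def]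
  define E where "E k n = (\<integral>\<^sup>+z. ennreal ((cmod z) ^ (2 * k) * w z) * indicator (cball 0 (r n)) z \<partial>lborel)"
    for k n
  have "incseq (E k)" for k
  proof (rule monoI)
    fix m n :: nat
    assume "m \<le> n"
    then have "r m \<le> r n"
      by (simp add: r_def frac_le)
    then show "E k m \<le> E k n"
      unfolding E_def by (intro nn_integral_mono mult_left_mono indicator_leI) auto
  qed
  have "(\<integral>\<^sup>+z. ennreal ((cmod (h z))\<^sup>2 * w z) * indicator (ball 0 1) z \<partial>lborel)
      = (SUP n. \<integral>\<^sup>+z. ennreal ((cmod (h z))\<^sup>2 * w z) * indicator (cball 0 (r n)) z \<partial>lborel)"
    by (rule ball_eq_SUP) (rule truncated(1))
  also have "\<dots> = (SUP n. \<Sum>k. ennreal ((cmod (a k))\<^sup>2) * E k n)"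
    by (simp only: truncated(2) E_def)
  also have "\<dots> = (\<Sum>k. SUP n. ennreal ((cmod (a k))\<^sup>2) * E k n)"
    using \<open>incseq (E _)\<close>
    by (intro ennreal_suminf_SUP_eq[symmetric]) (auto simp: incseq_def intro!: mult_left_mono)
  also have "\<dots> = (\<Sum>k. ennreal ((cmod (a k))\<^sup>2) *
            (\<integral>\<^sup>+z. ennreal ((cmod z) ^ (2 * k) * w z) * indicator (ball 0 1) z \<partial>lborel))"
    unfolding SUP_mult_left_ennreal[symmetric] E_def
    using w_meas by (subst ball_eq_SUP) (simp_all add: r_def)
  finally show ?thesis .
qed

lemma nn_integral_ball_norm_sq_power_series_beta:
  fixes a :: "nat \<Rightarrow> complex"
  assumes ser: "\<And>z. z \<in> ball 0 1 \<Longrightarrow> (\<lambda>k. a k * z ^ k) sums h z"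
  shows "(\<integral>\<^sup>+z. ennreal ((cmod (h z))\<^sup>2 * (1 - (cmod z)\<^sup>2) ^ s) * indicator (ball 0 1) z \<partial>lborel)
       = pi * (\<Sum>k. ennreal ((cmod (a k))\<^sup>2 * beta_moment s k))"
proof -
  have "(\<integral>\<^sup>+z. ennreal ((cmod (h z))\<^sup>2 * (1 - (cmod z)\<^sup>2) ^ s) * indicator (ball 0 1) z \<partial>lborel)
      = (\<Sum>k. ennreal ((cmod (a k))\<^sup>2) * (pi * beta_moment s k))"
  proof (subst nn_integral_ball_norm_sq_power_series[OF ser])
    show "0 \<le> (1 - (cmod z)\<^sup>2) ^ s \<and> (1 - (cmod z)\<^sup>2) ^ s \<le> 1" if "z \<in> ball 0 1" for z
      using that by (auto simp: abs_square_le_1 less_imp_le power_le_one)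
  qed (simp_all add: norm_mult nn_integral_disc_moment)
  also have "\<dots> = pi * (\<Sum>k. ennreal ((cmod (a k))\<^sup>2 * beta_moment s k))"
    using beta_moment_pos[of s] by (simp add: ennreal_mult' less_imp_le mult.left_commute)
  finally show ?thesis .
qed

section \<open>A discrete Hardy inequality\<close>

lemma sum_atMost_eq_Abel:
  fixes \<beta> :: "nat \<Rightarrow> 'a::field_char_0"
  defines "D i \<equiv> \<Sum>j\<le>i. of_nat (j + 1) * \<beta> j"
  shows "(\<Sum>i\<le>m. \<beta> i) = D m / of_nat (m + 1) + (\<Sum>i<m. D i / (of_nat (i + 1) * of_nat (i + 2)))"
proof (induction m)
  case (Suc m)
  define p :: 'a where "p = of_nat (m + 1)"
  have p_Suc: "of_nat (m + 2) = p + 1" "of_nat (Suc m + 1) = p + 1"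
    by (simp_all add: p_def algebra_simps)
  have "p = of_nat (Suc m)" "p + 1 = of_nat (Suc (Suc m))"
    by (simp_all add: p_def)
  then have p: "p \<noteq> 0" "p + 1 \<noteq> 0"
    by (simp_all only: of_nat_neq_0 not_False_eq_True)
  have "D (Suc m) = D m + (p + 1) * \<beta> (Suc m)"
    by (simp add: D_def p_def)
  moreover have "D m / p + \<beta> (Suc m) = (D m + (p + 1) * \<beta> (Suc m)) / (p + 1) + D m / (p * (p + 1))"
  proof -
    have "D m / (p + 1) = (D m * p) / (p * (p + 1))"
      using p by simp
    then have "D m / (p + 1) + D m / (p * (p + 1)) = (D m * p + D m) / (p * (p + 1))"
      by (simp add: add_divide_distrib)
    also have "D m * p + D m = D m * (p + 1)"
      by (simp add: algebra_simps)
    also have "D m * (p + 1) / (p * (p + 1)) = D m / p"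
      using p by simp
    finally show ?thesis
      using p by (simp add: add_divide_distrib add_ac)
  qed
  ultimately have "D m / of_nat (m + 1) + \<beta> (Suc m)
      = D (Suc m) / of_nat (Suc m + 1) + D m / (of_nat (m + 1) * of_nat (m + 2))"
    by (simp only: p_Suc p_def[symmetric])
  with Suc show ?case
    by (simp add: add_ac)
qed (simp add: D_def)

lemma weighted_sum_square_le:
  fixes w x :: "'i \<Rightarrow> real"
  assumes "\<And>i. i \<in> A \<Longrightarrow> 0 \<le> w i" "sum w A \<le> 1"
  shows "(\<Sum>i\<in>A. w i * x i)\<^sup>2 \<le> (\<Sum>i\<in>A. w i * (x i)\<^sup>2)"
proof -
  have "(\<Sum>i\<in>A. w i * x i)\<^sup>2 = (\<Sum>i\<in>A. sqrt (w i) * (sqrt (w i) * x i))\<^sup>2"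
    using assms(1) by (intro arg_cong[where f="\<lambda>t. t\<^sup>2"] sum.cong) (auto simp: mult.assoc[symmetric])
  also have "\<dots> \<le> (\<Sum>i\<in>A. (sqrt (w i))\<^sup>2) * (\<Sum>i\<in>A. (sqrt (w i) * x i)\<^sup>2)"
    by (rule Cauchy_Schwarz_ineq_sum)
  also have "\<dots> = sum w A * (\<Sum>i\<in>A. w i * (x i)\<^sup>2)"
    using assms(1) by (simp add: power_mult_distrib)
  also have "\<dots> \<le> 1 * (\<Sum>i\<in>A. w i * (x i)\<^sup>2)"
    using assms by (intro mult_right_mono sum_nonneg mult_nonneg_nonneg) auto
  finally show ?thesis
    by simp
qed

lemma sum_inverse_consecutive_le_1: "(\<Sum>i<m. 1 / ((real i + 1) * (real i + 2))) \<le> 1"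
proof -
  have "(\<Sum>i<m. 1 / ((real i + 1) * (real i + 2))) = (\<Sum>i<m. (- 1 / (real (Suc i) + 1)) - (- 1 / (real i + 1)))"
    by (intro sum.cong refl) (simp add: field_simps)
  also have "\<dots> = 1 - 1 / (real m + 1)"
    by (subst sum_lessThan_telescope) simp
  finally show ?thesis
    by simp
qed

lemma norm_sq_partial_sum_Suc_le:
  fixes \<alpha> :: "nat \<Rightarrow> complex"
  defines "D i \<equiv> \<Sum>j\<le>i. of_nat (j + 1) * \<alpha> (j + 1)"
  shows "(cmod (\<Sum>i\<le>Suc m. \<alpha> i))\<^sup>2
    \<le> 3 * (cmod (\<alpha> 0))\<^sup>2 + 3 * ((cmod (D m))\<^sup>2 / (real m + 1)\<^sup>2)
      + 3 * (\<Sum>i<m. (cmod (D i))\<^sup>2 / ((real i + 1) * (real i + 2)))"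
proof -
  define w :: "nat \<Rightarrow> real" where "w i = 1 / ((real i + 1) * (real i + 2))" for i
  define x y z where "x = cmod (\<alpha> 0)" and "y = cmod (D m) / (real m + 1)"
    and "z = (\<Sum>i<m. w i * cmod (D i))"
  have "(\<Sum>i\<le>Suc m. \<alpha> i) = \<alpha> 0 + (\<Sum>i\<le>m. \<alpha> (i + 1))"
    by (subst sum.atMost_Suc_shift) simp
  also have "\<dots> = \<alpha> 0 + D m / of_nat (m + 1) + (\<Sum>i<m. D i / (of_nat (i + 1) * of_nat (i + 2)))"
    unfolding D_def by (simp only: sum_atMost_eq_Abel[of "\<lambda>i. \<alpha> (i + 1)"] add.assoc)
  also have "cmod \<dots> \<le> x + y + z"
  proof -
    have "cmod (\<Sum>i<m. D i / (of_nat (i + 1) * of_nat (i + 2))) \<le> (\<Sum>i<m. cmod (D i / (of_nat (i + 1) * of_nat (i + 2))))"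
      by (rule norm_sum)
    also have "\<dots> = z"
      unfolding z_def w_def by (intro sum.cong refl) (simp only: norm_divide norm_mult norm_of_nat, simp add: add.commute)
    moreover have "cmod (D m / of_nat (m + 1)) = y"
      by (simp only: y_def norm_divide norm_of_nat) simp
    ultimately show ?thesis
      unfolding x_def using norm_triangle_ineq[THEN order_trans] add_mono norm_triangle_ineq
      by (smt (verit, best))
  qed
  finally have "(cmod (\<Sum>i\<le>Suc m. \<alpha> i))\<^sup>2 \<le> (x + y + z)\<^sup>2"
    by (intro power_mono) auto
  also have "\<dots> \<le> 3 * (x\<^sup>2 + y\<^sup>2 + z\<^sup>2)"
  proof -
    have "0 \<le> (x - y)\<^sup>2 + (y - z)\<^sup>2 + (x - z)\<^sup>2"
      by simp
    then show ?thesis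
      by (simp add: power2_eq_square algebra_simps)
  qed
  also have "z\<^sup>2 \<le> (\<Sum>i<m. w i * (cmod (D i))\<^sup>2)"
    unfolding z_def using sum_inverse_consecutive_le_1[of m]
    by (intro weighted_sum_square_le) (auto simp: w_def)
  finally show ?thesis
    by (simp add: x_def y_def w_def power_divide algebra_simps)
qed

lemma ennreal_suminf_lessThan_swap: "(\<Sum>m. \<Sum>i<m. f i m :: ennreal) = (\<Sum>i. \<Sum>k. f i (k + Suc i))"
proof -
  define g where "g i m = (if i < m then f i m else 0)" for i m
  have finite_as_suminf: "(\<Sum>i<m. f i m) = (\<Sum>i. g i m)" for m
    unfolding g_def by (rule sums_unique[OF sums_If_finite_set[of "{..<m}"], simplified])
  have inner: "(\<integral>\<^sup>+m. g i m \<partial>count_space UNIV) = (\<Sum>k. f i (k + Suc i))" for i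
  proof -
    have "(\<Sum>m. g i m) = (\<Sum>k. g i (k + Suc i)) + (\<Sum>m<Suc i. g i m)"
      by (rule suminf_offset) simp
    then show ?thesis
      by (simp add: nn_integral_count_space_nat g_def)
  qed
  have "(\<Sum>m. \<Sum>i<m. f i m) = (\<integral>\<^sup>+m. (\<Sum>i. g i m) \<partial>count_space UNIV)"
    by (simp add: finite_as_suminf nn_integral_count_space_nat)
  also have "\<dots> = (\<Sum>i. \<integral>\<^sup>+m. g i m \<partial>count_space UNIV)"
    by (rule nn_integral_suminf) simp
  finally show ?thesis
    by (simp only: inner)
qed

lemma ennreal_norm_sq_partial_sum_Suc_le:
  fixes \<alpha> :: "nat \<Rightarrow> complex" and c :: "nat \<Rightarrow> real"
  defines "D i \<equiv> \<Sum>j\<le>i. of_nat (j + 1) * \<alpha> (j + 1)"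
  assumes c_nonneg: "\<And>k. 0 \<le> c k" and c_decreasing: "\<And>k. c (Suc k) \<le> c k"
  shows "ennreal ((cmod (\<Sum>i\<le>Suc m. \<alpha> i))\<^sup>2 * c (Suc m))
    \<le> 3 * ennreal ((cmod (\<alpha> 0))\<^sup>2 * c (Suc m)) + 3 * ennreal ((cmod (D m))\<^sup>2 * c m)
      + 3 * (\<Sum>i<m. ennreal ((cmod (D i))\<^sup>2 / ((real i + 1) * (real i + 2)) * c (Suc m)))"
proof -
  define a d where "a = (cmod (\<alpha> 0))\<^sup>2" and "d k = (cmod (D k))\<^sup>2" for k
  have "d m \<le> d m * (real m + 1)\<^sup>2"
    using one_le_power[of "real m + 1" 2] by (simp add: d_def mult_le_cancel_left1)
  then have last: "d m / (real m + 1)\<^sup>2 * c (Suc m) \<le> d m * c m"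
    using c_nonneg c_decreasing[of m] by (intro mult_mono) (auto simp: d_def divide_le_eq)
  have "(cmod (\<Sum>i\<le>Suc m. \<alpha> i))\<^sup>2 * c (Suc m)
      \<le> (3 * a + 3 * (d m / (real m + 1)\<^sup>2) + 3 * (\<Sum>i<m. d i / ((real i + 1) * (real i + 2)))) * c (Suc m)"
    using norm_sq_partial_sum_Suc_le[of \<alpha> m] c_nonneg unfolding a_def d_def D_def by (rule mult_right_mono)
  also have "\<dots> = 3 * (a * c (Suc m)) + 3 * (d m / (real m + 1)\<^sup>2 * c (Suc m))
      + 3 * (\<Sum>i<m. d i / ((real i + 1) * (real i + 2)) * c (Suc m))"
    by (simp only: distrib_right mult.assoc sum_distrib_right)
  finally have "(cmod (\<Sum>i\<le>Suc m. \<alpha> i))\<^sup>2 * c (Suc m)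
      \<le> 3 * (a * c (Suc m)) + 3 * (d m * c m) + 3 * (\<Sum>i<m. d i / ((real i + 1) * (real i + 2)) * c (Suc m))"
    using last by linarith
  then have "ennreal ((cmod (\<Sum>i\<le>Suc m. \<alpha> i))\<^sup>2 * c (Suc m))
      \<le> ennreal (3 * (a * c (Suc m)) + 3 * (d m * c m) + 3 * (\<Sum>i<m. d i / ((real i + 1) * (real i + 2)) * c (Suc m)))"
    by (rule ennreal_leI)
  also have "\<dots> = 3 * ennreal (a * c (Suc m)) + 3 * ennreal (d m * c m)
      + 3 * ennreal (\<Sum>i<m. d i / ((real i + 1) * (real i + 2)) * c (Suc m))"
    using c_nonneg by (simp add: ennreal_plus ennreal_mult sum_nonneg a_def d_def)
  also have "ennreal (\<Sum>i<m. d i / ((real i + 1) * (real i + 2)) * c (Suc m))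
      = (\<Sum>i<m. ennreal (d i / ((real i + 1) * (real i + 2)) * c (Suc m)))"
    using c_nonneg by (intro sum_ennreal[symmetric]) (simp add: d_def)
  finally show ?thesis
    by (simp only: a_def d_def)
qed

lemma suminf_triangle_weighted_le:
  fixes c d :: "nat \<Rightarrow> real"
  assumes c_nonneg: "\<And>k. 0 \<le> c k"
    and c_tail: "\<And>i. (\<Sum>k. ennreal (c (k + i + 2))) \<le> ennreal ((real i + 1) * (real i + 2) * c i)"
    and d_nonneg: "\<And>i. 0 \<le> d i"
  shows "(\<Sum>m. \<Sum>i<m. ennreal (d i / ((real i + 1) * (real i + 2)) * c (Suc m))) \<le> (\<Sum>i. ennreal (d i * c i))"
proof -
  define x where "x i = d i / ((real i + 1) * (real i + 2))" for i
  have x_nonneg: "0 \<le> x i" for i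
    by (simp add: x_def d_nonneg)
  have "(\<Sum>k. ennreal (x i * c (Suc (k + Suc i)))) \<le> ennreal (d i * c i)" for i
  proof -
    have "(\<Sum>k. ennreal (x i * c (Suc (k + Suc i)))) = ennreal (x i) * (\<Sum>k. ennreal (c (k + i + 2)))"
      using x_nonneg c_nonneg by (simp add: ennreal_mult)
    also have "\<dots> \<le> ennreal (x i) * ennreal ((real i + 1) * (real i + 2) * c i)"
      by (intro mult_left_mono c_tail) simp
    also have "\<dots> = ennreal (d i * c i)"
      using x_nonneg c_nonneg by (simp add: x_def ennreal_mult'[symmetric])
    finally show ?thesis .
  qed
  then show ?thesis
    unfolding x_def[symmetric] ennreal_suminf_lessThan_swap by (intro suminf_le) simp_all
qed

lemma suminf_norm_sq_partial_sums_le: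
  fixes \<alpha> :: "nat \<Rightarrow> complex" and c :: "nat \<Rightarrow> real"
  defines "D i \<equiv> \<Sum>j\<le>i. of_nat (j + 1) * \<alpha> (j + 1)"
  assumes c_nonneg: "\<And>k. 0 \<le> c k" and c_decreasing: "\<And>k. c (Suc k) \<le> c k"
    and c_sum: "(\<Sum>k. ennreal (c k)) \<le> 1"
    and c_tail: "\<And>i. (\<Sum>k. ennreal (c (k + i + 2))) \<le> ennreal ((real i + 1) * (real i + 2) * c i)"
  shows "(\<Sum>k. ennreal ((cmod (\<Sum>i\<le>k. \<alpha> i))\<^sup>2 * c k))
    \<le> 6 * (ennreal ((cmod (\<alpha> 0))\<^sup>2) + (\<Sum>k. ennreal ((cmod (D k))\<^sup>2 * c k)))"
proof -
  define a d where "a = (cmod (\<alpha> 0))\<^sup>2" and "d k = (cmod (D k))\<^sup>2" for k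
  define x where "x i = d i / ((real i + 1) * (real i + 2))" for i
  have a_nonneg: "0 \<le> a"
    by (simp add: a_def)
  have triangle: "(\<Sum>m. \<Sum>i<m. ennreal (x i * c (Suc m))) \<le> (\<Sum>i. ennreal (d i * c i))"
    using c_nonneg c_tail unfolding x_def by (rule suminf_triangle_weighted_le) (simp add: d_def)
  have head: "ennreal (a * c 0) + 3 * (\<Sum>m. ennreal (a * c (Suc m))) \<le> 3 * ennreal a"
  proof -
    have "ennreal (a * c 0) + 3 * (\<Sum>m. ennreal (a * c (Suc m)))
        \<le> 3 * ennreal (a * c 0) + 3 * (\<Sum>m. ennreal (a * c (Suc m)))"
      using mult_right_mono[of "1 :: ennreal" 3 "ennreal (a * c 0)"] by (intro add_right_mono) simp
    also have "\<dots> = 3 * (\<Sum>k. ennreal (a * c k))"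
      using suminf_offset[of "\<lambda>k. ennreal (a * c k)" 1] by (simp add: distrib_left add.commute)
    also have "\<dots> = 3 * ennreal a * (\<Sum>k. ennreal (c k))"
      using a_nonneg by (simp add: ennreal_mult' mult.assoc)
    also have "\<dots> \<le> 3 * ennreal a * 1"
      by (intro mult_left_mono c_sum) simp
    finally show ?thesis
      by simp
  qed
  have "(\<Sum>k. ennreal ((cmod (\<Sum>i\<le>k. \<alpha> i))\<^sup>2 * c k))
      = ennreal (a * c 0) + (\<Sum>m. ennreal ((cmod (\<Sum>i\<le>Suc m. \<alpha> i))\<^sup>2 * c (Suc m)))"
    using suminf_offset[of "\<lambda>k. ennreal ((cmod (\<Sum>i\<le>k. \<alpha> i))\<^sup>2 * c k)" 1] by (simp add: a_def add.commute)
  also have "\<dots> \<le> ennreal (a * c 0)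
      + (\<Sum>m. 3 * ennreal (a * c (Suc m)) + 3 * ennreal (d m * c m) + 3 * (\<Sum>i<m. ennreal (x i * c (Suc m))))"
    using ennreal_norm_sq_partial_sum_Suc_le[where \<alpha>=\<alpha> and c=c, OF c_nonneg c_decreasing]
    by (intro add_left_mono suminf_le) (simp_all add: a_def d_def x_def D_def)
  also have "\<dots> = (ennreal (a * c 0) + 3 * (\<Sum>m. ennreal (a * c (Suc m))))
      + 3 * (\<Sum>m. ennreal (d m * c m)) + 3 * (\<Sum>m. \<Sum>i<m. ennreal (x i * c (Suc m)))"
    by (simp add: suminf_add[symmetric] distrib_left add.assoc)
  also have "\<dots> \<le> 3 * ennreal a + 3 * (\<Sum>k. ennreal (d k * c k)) + 3 * (\<Sum>k. ennreal (d k * c k))"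
    by (intro add_mono head triangle mult_left_mono order_refl) simp
  also have "\<dots> \<le> 6 * ennreal a + 6 * (\<Sum>k. ennreal (d k * c k))"
  proof -
    have "(3 :: ennreal) * ennreal a \<le> 6 * ennreal a"
      by (intro mult_right_mono) simp_all
    moreover have "(3 :: ennreal) * S + 3 * S = 6 * S" for S
      by (simp flip: distrib_right)
    ultimately show ?thesis
      by (simp add: add.assoc)
  qed
  finally show ?thesis
    by (simp add: a_def d_def distrib_left)
qed

lemma suminf_norm_sq_partial_sums_beta_moment_le:
  fixes \<alpha> :: "nat \<Rightarrow> complex"
  shows "(\<Sum>k. ennreal ((cmod (\<Sum>i\<le>k. \<alpha> i))\<^sup>2 * beta_moment (Suc s) k))
    \<le> 6 * (ennreal ((cmod (\<alpha> 0))\<^sup>2)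
      + (\<Sum>k. ennreal ((cmod (\<Sum>j\<le>k. of_nat (j + 1) * \<alpha> (j + 1)))\<^sup>2 * beta_moment (Suc s) k)))"
proof (rule suminf_norm_sq_partial_sums_le)
  show "0 \<le> beta_moment (Suc s) k" for k
    using beta_moment_pos[of "Suc s" k] by simp
  show "beta_moment (Suc s) (Suc k) \<le> beta_moment (Suc s) k" for k
    by (rule beta_moment_Suc_le)
  have "(\<Sum>k. ennreal (beta_moment (Suc s) k)) = ennreal (beta_moment s 0)"
    using beta_moment_tail_sums[of s 0] beta_moment_pos[of "Suc s"] by (intro suminf_ennreal_eq) (auto simp: less_imp_le)
  moreover have "beta_moment s 0 \<le> 1"
    by (simp add: beta_moment_def)
  ultimately show "(\<Sum>k. ennreal (beta_moment (Suc s) k)) \<le> 1"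
    by (simp add: ennreal_le_1)
  show "(\<Sum>k. ennreal (beta_moment (Suc s) (k + i + 2))) \<le> ennreal ((real i + 1) * (real i + 2) * beta_moment (Suc s) i)"
    for i
  proof -
    have "(\<Sum>k. ennreal (beta_moment (Suc s) (k + i + 2))) = ennreal (beta_moment s (i + 2))"
      using beta_moment_tail_sums[of s "i + 2"] beta_moment_pos[of "Suc s"]
      by (intro suminf_ennreal_eq) (auto simp: add.assoc less_imp_le)
    then show ?thesis
      using beta_moment_tail_le[of s i] by (simp add: ennreal_leI)
  qed
qed

section \<open>The Poisson kernel\<close>

lemma cnj_power_diff_unimodular:
  assumes "cmod \<zeta> = 1" "i \<le> k"
  shows "cnj \<zeta> ^ (k - i) = cnj \<zeta> ^ k * \<zeta> ^ i"
proof -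
  have "cnj \<zeta> * \<zeta> = 1"
    using assms(1) by (metis complex_norm_square mult.commute of_real_1 power_one)
  moreover have "cnj \<zeta> ^ k = cnj \<zeta> ^ (k - i) * cnj \<zeta> ^ i"
    using assms(2) by (simp add: power_add[symmetric])
  ultimately show ?thesis
    by (simp add: mult.assoc power_mult_distrib[symmetric])
qed

lemma power_series_divide_sums:
  fixes e :: "nat \<Rightarrow> complex"
  assumes ser: "\<And>z. z \<in> ball 0 1 \<Longrightarrow> (\<lambda>k. e k * z ^ k) sums F z"
    and \<zeta>: "cmod \<zeta> = 1" and z: "z \<in> ball 0 1"
  shows "(\<lambda>k. (cnj \<zeta> ^ Suc k * (\<Sum>i\<le>k. e i * \<zeta> ^ i)) * z ^ k) sums (F z / (\<zeta> - z))"
proof -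
  have small: "cmod (cnj \<zeta> * z) < 1"
    using \<zeta> z by (simp add: norm_mult)
  have "summable (\<lambda>k. norm (e k * z ^ k))"
    using ser z by (intro summable_norm_power_series_ball) (auto simp: sums_iff)
  moreover have "summable (\<lambda>j. norm (cnj \<zeta> ^ Suc j * z ^ j))"
    using summable_geometric[of "norm (cnj \<zeta> * z)"] small \<zeta> by (simp add: norm_mult norm_power)
  ultimately have "(\<lambda>k. \<Sum>i\<le>k. e i * z ^ i * (cnj \<zeta> ^ Suc (k - i) * z ^ (k - i)))
      sums ((\<Sum>k. e k * z ^ k) * (\<Sum>j. cnj \<zeta> ^ Suc j * z ^ j))"
    by (rule Cauchy_product_sums)
  moreover have "(\<Sum>k. e k * z ^ k) = F z"
    using ser[OF z] by (simp add: sums_iff)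
  moreover have "(\<Sum>j. cnj \<zeta> ^ Suc j * z ^ j) = 1 / (\<zeta> - z)"
  proof -
    have "\<zeta> - z \<noteq> 0" "cnj \<zeta> \<noteq> 0"
      using \<zeta> z by auto
    moreover have "1 - cnj \<zeta> * z = cnj \<zeta> * (\<zeta> - z)"
      using \<zeta> by (simp add: algebra_simps complex_norm_square[symmetric])
    ultimately show ?thesis
      using sums_mult[OF geometric_sums[OF small], of "cnj \<zeta>"] by (simp add: sums_iff power_mult_distrib mult_ac)
  qed
  moreover have "(\<Sum>i\<le>k. e i * z ^ i * (cnj \<zeta> ^ Suc (k - i) * z ^ (k - i)))
      = (cnj \<zeta> ^ Suc k * (\<Sum>i\<le>k. e i * \<zeta> ^ i)) * z ^ k" for k
  proof -
    have "e i * z ^ i * (cnj \<zeta> ^ Suc (k - i) * z ^ (k - i)) = cnj \<zeta> ^ Suc k * (e i * \<zeta> ^ i) * z ^ k"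
      if "i \<le> k" for i
      using cnj_power_diff_unimodular[OF \<zeta> that] power_add[of z i "k - i"] that by (simp add: mult_ac)
    then have "(\<Sum>i\<le>k. e i * z ^ i * (cnj \<zeta> ^ Suc (k - i) * z ^ (k - i)))
        = (\<Sum>i\<le>k. cnj \<zeta> ^ Suc k * (e i * \<zeta> ^ i) * z ^ k)"
      by (intro sum.cong) simp_all
    then show ?thesis
      by (simp only: sum_distrib_left sum_distrib_right)
  qed
  ultimately show ?thesis
    by (simp add: divide_inverse)
qed

definition poisson_kernel :: "complex \<Rightarrow> complex \<Rightarrow> real" where
  "poisson_kernel z \<zeta> = (1 - (cmod z)\<^sup>2) / (cmod (z - \<zeta>))\<^sup>2"

text \<open>This holds also for \<open>z = \<zeta>\<close>, where both sides are \<open>0\<close> by the convention \<open>x / 0 = 0\<close>.\<close>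

lemma norm_sq_mult_poisson_kernel:
  "(cmod w)\<^sup>2 * poisson_kernel z \<zeta> * (1 - (cmod z)\<^sup>2) ^ m = (cmod (w / (\<zeta> - z)))\<^sup>2 * (1 - (cmod z)\<^sup>2) ^ Suc m"
  by (simp add: poisson_kernel_def norm_divide power_divide norm_minus_commute)

lemma nn_integral_poisson_kernel_power_series:
  fixes a :: "nat \<Rightarrow> complex"
  assumes ser: "\<And>z. z \<in> ball 0 1 \<Longrightarrow> (\<lambda>k. a k * z ^ k) sums h z" and \<zeta>: "cmod \<zeta> = 1"
  shows "(\<integral>\<^sup>+z. ennreal ((cmod (h z))\<^sup>2 * poisson_kernel z \<zeta> * (1 - (cmod z)\<^sup>2) ^ m) * indicator (ball 0 1) z \<partial>lborel)
    = pi * (\<Sum>k. ennreal ((cmod (\<Sum>i\<le>k. a i * \<zeta> ^ i))\<^sup>2 * beta_moment (Suc m) k))"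
  unfolding norm_sq_mult_poisson_kernel
  by (subst nn_integral_ball_norm_sq_power_series_beta[OF power_series_divide_sums[OF ser \<zeta>]])
    (simp_all add: norm_mult norm_power \<zeta>)

lemma nn_integral_poisson_kernel_le_deriv:
  fixes g :: "complex \<Rightarrow> complex"
  assumes hol: "g holomorphic_on ball 0 1" and \<zeta>: "cmod \<zeta> = 1"
  shows "(\<integral>\<^sup>+z. ennreal ((cmod (g z))\<^sup>2 * poisson_kernel z \<zeta> * (1 - (cmod z)\<^sup>2) ^ m) * indicator (ball 0 1) z \<partial>lborel)
    \<le> 6 * (pi * (cmod (g 0))\<^sup>2 +
      (\<integral>\<^sup>+z. ennreal ((cmod (deriv g z))\<^sup>2 * poisson_kernel z \<zeta> * (1 - (cmod z)\<^sup>2) ^ m)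
        * indicator (ball 0 1) z \<partial>lborel))"
proof -
  define b where "b k = (deriv ^^ k) g 0 / fact k" for k
  define \<alpha> where "\<alpha> i = b i * \<zeta> ^ i" for i
  define S where "S = (\<Sum>k. ennreal ((cmod (\<Sum>i\<le>k. of_nat (i + 1) * b (i + 1) * \<zeta> ^ i))\<^sup>2 * beta_moment (Suc m) k))"
  have taylor: "(\<lambda>k. b k * z ^ k) sums g z" if "z \<in> ball 0 1" for z
    using holomorphic_power_series[OF hol that] by (simp add: b_def)
  have taylor_deriv: "(\<lambda>k. (of_nat (k + 1) * b (k + 1)) * z ^ k) sums deriv g z" if "z \<in> ball 0 1" for z
  proof -
    have "(deriv ^^ k) (deriv g) 0 / fact k = of_nat (k + 1) * b (k + 1)" for k
      by (simp add: b_def funpow_Suc_right del: funpow.simps of_nat_Suc)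
    then show ?thesis
      using holomorphic_power_series[OF holomorphic_deriv[OF hol open_ball] that] by simp
  qed
  have "(\<Sum>j\<le>k. of_nat (j + 1) * \<alpha> (j + 1)) = \<zeta> * (\<Sum>i\<le>k. of_nat (i + 1) * b (i + 1) * \<zeta> ^ i)" for k
    by (simp add: \<alpha>_def sum_distrib_left mult_ac)
  then have deriv_coefficients: "(\<Sum>k. ennreal ((cmod (\<Sum>j\<le>k. of_nat (j + 1) * \<alpha> (j + 1)))\<^sup>2 * beta_moment (Suc m) k)) = S"
    by (simp add: S_def norm_mult \<zeta>)
  have "(\<integral>\<^sup>+z. ennreal ((cmod (g z))\<^sup>2 * poisson_kernel z \<zeta> * (1 - (cmod z)\<^sup>2) ^ m) * indicator (ball 0 1) z \<partial>lborel)
      = pi * (\<Sum>k. ennreal ((cmod (\<Sum>i\<le>k. \<alpha> i))\<^sup>2 * beta_moment (Suc m) k))"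
    unfolding \<alpha>_def by (rule nn_integral_poisson_kernel_power_series[OF taylor \<zeta>])
  also have "\<dots> \<le> pi * (6 * (ennreal ((cmod (\<alpha> 0))\<^sup>2) + S))"
    unfolding deriv_coefficients[symmetric] by (intro mult_left_mono suminf_norm_sq_partial_sums_beta_moment_le) simp
  also have "\<dots> = 6 * (pi * (cmod (g 0))\<^sup>2 + pi * S)"
    by (simp add: \<alpha>_def b_def ennreal_mult distrib_left mult_ac)
  also have "pi * S = (\<integral>\<^sup>+z. ennreal ((cmod (deriv g z))\<^sup>2 * poisson_kernel z \<zeta> * (1 - (cmod z)\<^sup>2) ^ m)
      * indicator (ball 0 1) z \<partial>lborel)"
    unfolding S_def by (rule nn_integral_poisson_kernel_power_series[OF taylor_deriv \<zeta>, symmetric])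
  finally show ?thesis .
qed

lemma borel_measurable_poisson_kernel[measurable]:
  assumes [measurable]: "f \<in> M \<rightarrow>\<^sub>M borel" "g \<in> M \<rightarrow>\<^sub>M borel"
  shows "(\<lambda>x. poisson_kernel (f x) (g x)) \<in> borel_measurable M"
  unfolding poisson_kernel_def by measurable

lemma poisson_kernel_nonneg: "cmod z < 1 \<Longrightarrow> 0 \<le> poisson_kernel z \<zeta>"
  unfolding poisson_kernel_def by (intro divide_nonneg_nonneg) (auto simp: abs_square_le_1 less_imp_le)

lemma poisson_kernel_le:
  assumes "cmod z < 1" "cmod \<zeta> = 1"
  shows "poisson_kernel z \<zeta> \<le> 1 / (1 - cmod z)\<^sup>2"
proof -
  have "1 - cmod z \<le> cmod (z - \<zeta>)"
    using norm_triangle_ineq2[of \<zeta> z] assms by (simp add: norm_minus_commute)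
  then have "(1 - cmod z)\<^sup>2 \<le> (cmod (z - \<zeta>))\<^sup>2"
    using assms by (intro power_mono) auto
  then show ?thesis
    unfolding poisson_kernel_def using assms
    by (intro frac_le) (auto simp: abs_square_le_1 less_imp_le)
qed

lemma measurable_ident_sphere:
  assumes "sets \<mu> = sets (restrict_space borel (sphere (0::complex) 1))"
  shows "(\<lambda>\<zeta>. \<zeta>) \<in> \<mu> \<rightarrow>\<^sub>M borel"
  by (subst measurable_cong_sets[OF assms refl]) (rule measurable_restrict_space1, simp)

lemma ennreal_mult_poisson_int:
  assumes fin: "finite_measure \<mu>" and sets: "sets \<mu> = sets (restrict_space borel (sphere (0::complex) 1))"
    and z: "cmod z < 1" and c: "0 \<le> c"
  shows "ennreal (c * poisson_int \<mu> z) = (\<integral>\<^sup>+\<zeta>. ennreal (c * poisson_kernel z \<zeta>) \<partial>\<mu>)"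
proof -
  interpret finite_measure \<mu>
    by (rule fin)
  have [measurable]: "(\<lambda>\<zeta>. \<zeta>) \<in> \<mu> \<rightarrow>\<^sub>M borel"
    by (rule measurable_ident_sphere[OF sets])
  have space: "space \<mu> = sphere 0 1"
    using sets_eq_imp_space_eq[OF sets] by (simp add: space_restrict_space)
  have "integrable \<mu> (poisson_kernel z)"
    using poisson_kernel_le[OF z] poisson_kernel_nonneg[OF z]
    by (intro integrable_const_bound[where B="1 / (1 - cmod z)\<^sup>2"] AE_I2) (auto simp: space)
  then have "ennreal (poisson_int \<mu> z) = (\<integral>\<^sup>+\<zeta>. ennreal (poisson_kernel z \<zeta>) \<partial>\<mu>)"
    unfolding poisson_int_def poisson_kernel_def[symmetric]
    using poisson_kernel_nonneg[OF z] by (intro nn_integral_eq_integral[symmetric]) auto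
  then have "ennreal c * ennreal (poisson_int \<mu> z) = (\<integral>\<^sup>+\<zeta>. ennreal c * ennreal (poisson_kernel z \<zeta>) \<partial>\<mu>)"
    by (simp add: nn_integral_cmult)
  then show ?thesis
    using c poisson_kernel_nonneg[OF z] by (simp add: ennreal_mult[symmetric] poisson_int_def poisson_kernel_def[symmetric] integral_nonneg_AE)
qed

lemma nn_integral_ball_poisson_int:
  fixes G :: "complex \<Rightarrow> real"
  assumes fin: "finite_measure \<mu>" and sets: "sets \<mu> = sets (restrict_space borel (sphere (0::complex) 1))"
    and cont: "continuous_on (ball 0 1) G" and nonneg: "\<And>z. z \<in> ball 0 1 \<Longrightarrow> 0 \<le> G z"
  shows "(\<integral>\<^sup>+z. ennreal (G z * poisson_int \<mu> z) * indicator (ball 0 1) z \<partial>lborel)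
    = (\<integral>\<^sup>+\<zeta>. \<integral>\<^sup>+z. ennreal (G z * poisson_kernel z \<zeta>) * indicator (ball 0 1) z \<partial>lborel \<partial>\<mu>)"
    and "(\<lambda>\<zeta>. \<integral>\<^sup>+z. ennreal (G z * poisson_kernel z \<zeta>) * indicator (ball 0 1) z \<partial>lborel) \<in> borel_measurable \<mu>"
proof -
  interpret finite_measure \<mu>
    by (rule fin)
  define u where "u z = indicator (ball 0 1) z * G z" for z
  have "(\<lambda>z. indicator (ball 0 1) z *\<^sub>R G z) \<in> borel_measurable borel"
    using cont by (intro borel_measurable_continuous_on_indicator) simp_all
  then have [measurable]: "u \<in> borel_measurable borel"
    by (simp add: u_def[abs_def])
  have [measurable]: "(\<lambda>\<zeta>. \<zeta>) \<in> \<mu> \<rightarrow>\<^sub>M borel"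
    by (rule measurable_ident_sphere[OF sets])
  have integrand: "ennreal (G z * poisson_kernel z \<zeta>) * indicator (ball 0 1) z = ennreal (u z * poisson_kernel z \<zeta>)"
    for z \<zeta>
    by (simp add: u_def indicator_def)
  have joint: "(\<lambda>(z, \<zeta>). ennreal (u z * poisson_kernel z \<zeta>)) \<in> borel_measurable (lborel \<Otimes>\<^sub>M \<mu>)"
    by measurable
  have "(\<integral>\<^sup>+z. ennreal (G z * poisson_int \<mu> z) * indicator (ball 0 1) z \<partial>lborel)
      = (\<integral>\<^sup>+z. \<integral>\<^sup>+\<zeta>. ennreal (u z * poisson_kernel z \<zeta>) \<partial>\<mu> \<partial>lborel)"
    using ennreal_mult_poisson_int[OF fin sets] nonneg by (intro nn_integral_cong) (simp add: u_def indicator_def)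
  also have "\<dots> = (\<integral>\<^sup>+\<zeta>. \<integral>\<^sup>+z. ennreal (u z * poisson_kernel z \<zeta>) \<partial>lborel \<partial>\<mu>)"
  proof -
    have "pair_sigma_finite lborel \<mu>"
      by (simp add: pair_sigma_finite_def sigma_finite_measure_axioms lborel.sigma_finite_measure_axioms)
    then show ?thesis
      using pair_sigma_finite.Fubini'[of lborel \<mu> "\<lambda>z \<zeta>. ennreal (u z * poisson_kernel z \<zeta>)"] joint
      by (subst eq_commute) simp
  qed
  finally show "(\<integral>\<^sup>+z. ennreal (G z * poisson_int \<mu> z) * indicator (ball 0 1) z \<partial>lborel)
    = (\<integral>\<^sup>+\<zeta>. \<integral>\<^sup>+z. ennreal (G z * poisson_kernel z \<zeta>) * indicator (ball 0 1) z \<partial>lborel \<partial>\<mu>)"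
    by (simp only: integrand)
  have "(\<lambda>\<zeta>. \<integral>\<^sup>+z. ennreal (u z * poisson_kernel z \<zeta>) \<partial>lborel) \<in> borel_measurable \<mu>"
    by (rule lborel.borel_measurable_nn_integral) measurable
  then show "(\<lambda>\<zeta>. \<integral>\<^sup>+z. ennreal (G z * poisson_kernel z \<zeta>) * indicator (ball 0 1) z \<partial>lborel) \<in> borel_measurable \<mu>"
    by (simp only: integrand)
qed

lemma area_int_less_top_iff:
  "area_int F < \<infinity> \<longleftrightarrow> (\<integral>\<^sup>+z. ennreal (F z) * indicator (ball 0 1) z \<partial>lborel) < \<infinity>"
  by (simp add: area_int_def ennreal_divide_eq_top_iff less_top[symmetric])

lemma area_int_poisson_int_less_top_of_deriv:
  fixes g :: "complex \<Rightarrow> complex"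
  assumes fin: "finite_measure \<mu>" and sets: "sets \<mu> = sets (restrict_space borel (sphere (0::complex) 1))"
    and hol: "g holomorphic_on ball 0 1"
    and deriv_finite: "area_int (\<lambda>z. (cmod (deriv g z))\<^sup>2 * poisson_int \<mu> z * (1 - (cmod z)\<^sup>2) ^ m) < \<infinity>"
  shows "area_int (\<lambda>z. (cmod (g z))\<^sup>2 * poisson_int \<mu> z * (1 - (cmod z)\<^sup>2) ^ m) < \<infinity>"
proof -
  interpret finite_measure \<mu>
    by (rule fin)
  define R where "R h \<zeta> = (\<integral>\<^sup>+z. ennreal ((cmod (h z))\<^sup>2 * (1 - (cmod z)\<^sup>2) ^ m * poisson_kernel z \<zeta>)
      * indicator (ball 0 1) z \<partial>lborel)" for h :: "complex \<Rightarrow> complex" and \<zeta>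
  have swap: "(\<integral>\<^sup>+z. ennreal ((cmod (h z))\<^sup>2 * poisson_int \<mu> z * (1 - (cmod z)\<^sup>2) ^ m) * indicator (ball 0 1) z \<partial>lborel)
      = (\<integral>\<^sup>+\<zeta>. R h \<zeta> \<partial>\<mu>)"
    and R_measurable: "R h \<in> borel_measurable \<mu>" if "h holomorphic_on ball 0 1" for h
  proof -
    have cont: "continuous_on (ball 0 1) (\<lambda>z. (cmod (h z))\<^sup>2 * (1 - (cmod z)\<^sup>2) ^ m)"
      using holomorphic_on_imp_continuous_on[OF that] by (intro continuous_intros) auto
    have nonneg: "0 \<le> (cmod (h z))\<^sup>2 * (1 - (cmod z)\<^sup>2) ^ m" if "z \<in> ball 0 1" for z
      using that by (auto simp: abs_square_le_1 less_imp_le)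
    note swapped = nn_integral_ball_poisson_int[OF fin sets cont nonneg]
    show "(\<integral>\<^sup>+z. ennreal ((cmod (h z))\<^sup>2 * poisson_int \<mu> z * (1 - (cmod z)\<^sup>2) ^ m) * indicator (ball 0 1) z \<partial>lborel)
      = (\<integral>\<^sup>+\<zeta>. R h \<zeta> \<partial>\<mu>)"
      using swapped(1) by (simp add: R_def mult_ac)
    show "R h \<in> borel_measurable \<mu>"
      unfolding R_def[abs_def] by (rule swapped(2))
  qed
  have hol_deriv: "deriv g holomorphic_on ball 0 1"
    by (rule holomorphic_deriv[OF hol open_ball])
  have space: "space \<mu> = sphere 0 1"
    using sets_eq_imp_space_eq[OF sets] by (simp add: space_restrict_space)
  have "(\<integral>\<^sup>+\<zeta>. R g \<zeta> \<partial>\<mu>) \<le> (\<integral>\<^sup>+\<zeta>. 6 * (pi * (cmod (g 0))\<^sup>2 + R (deriv g) \<zeta>) \<partial>\<mu>)"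
    using nn_integral_poisson_kernel_le_deriv[OF hol]
    by (intro nn_integral_mono) (auto simp: R_def space mult_ac)
  also have "\<dots> = 6 * (pi * (cmod (g 0))\<^sup>2 * emeasure \<mu> (space \<mu>) + (\<integral>\<^sup>+\<zeta>. R (deriv g) \<zeta> \<partial>\<mu>))"
    using R_measurable[OF hol_deriv] by (simp add: nn_integral_cmult nn_integral_add mult.assoc)
  also have "\<dots> < \<infinity>"
  proof -
    have "(\<integral>\<^sup>+\<zeta>. R (deriv g) \<zeta> \<partial>\<mu>) < \<infinity>"
      using deriv_finite unfolding area_int_less_top_iff swap[OF hol_deriv] .
    then show ?thesis
      using emeasure_finite[of "space \<mu>"] by (simp add: ennreal_mult_eq_top_iff less_top[symmetric])
  qed
  finally show ?thesis
    unfolding area_int_less_top_iff swap[OF hol] .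
qed

theorem lemma3p1:
  fixes \<mu> :: "complex measure" and n j :: nat and f :: "complex \<Rightarrow> complex"
  assumes "finite_measure \<mu>"
    and "sets \<mu> = sets (restrict_space borel (sphere 0 1))"
    and "emeasure \<mu> (space \<mu>) \<noteq> 0"
    and "n \<ge> 1"
    and "f \<in> H_mu \<mu> n"
    and "j \<le> n"
  shows "area_int (\<lambda>z. (cmod ((deriv ^^ j) f z))\<^sup>2 * poisson_int \<mu> z * (1 - (cmod z)\<^sup>2) ^ (n - 1)) < \<infinity>"
proof -
  define A where "A i = area_int (\<lambda>z. (cmod ((deriv ^^ i) f z))\<^sup>2 * poisson_int \<mu> z * (1 - (cmod z)\<^sup>2) ^ (n - 1))"
    for i
  have hol: "f holomorphic_on ball 0 1" and "D_mu \<mu> n f < \<infinity>"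
    using assms(5) by (auto simp: H_mu_def)
  then have "A n < \<infinity>"
    by (auto simp: D_mu_def A_def ennreal_mult_less_top)
  moreover have "A i < \<infinity>" if "A (Suc i) < \<infinity>" for i
    using that area_int_poisson_int_less_top_of_deriv[OF assms(1,2) holomorphic_higher_deriv[OF hol open_ball]]
    by (simp add: A_def)
  ultimately have "A j < \<infinity>"
    using inc_induct[OF assms(6), of "\<lambda>i. A i < \<infinity>"] by blast
  then show ?thesis
    by (simp add: A_def)
qed

end
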